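(* Let $b\ge1$, $q\ge2$, $n\ge b+1$ and $i\in[1,n-b+1]$. Then \[ |\{\boldsymbol{x}\in\Sigma_q^n: |\mathcal{D}_{1,b}(\boldsymbol{x})|=i\}|=q^b(q-1)^{i-1}\binom{n-b}{i-1}. \]
   Context: $\Sigma_q=\{0,\ldots,q-1\}$. A $b$-burst-deletion at position $i\in[1,n-b+1]$ transforms $x_1\cdots x_n$ into $x_1\cdots x_{i-1}x_{i+b}\cdots x_n$. $\mathcal{D}_{1,b}(\boldsymbol{x})$ is the set of all length-$(n-b)$ sequences obtainable from $\boldsymbol{x}$ by one $b$-burst-deletion. *)

theory Defs
  imports Main
begin

definition seqs :: "nat \<Rightarrow> nat \<Rightarrow> nat list set" where
  "seqs q n = {x. length x = n \<and> set x \<subseteq> {0..<q}}"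

text \<open>b-burst-deletion at (1-indexed) position i: x_1..x_{i-1} x_{i+b}..x_n.\<close>
definition burst_del :: "nat \<Rightarrow> nat \<Rightarrow> 'a list \<Rightarrow> 'a list" where
  "burst_del b i x = take (i - 1) x @ drop (i - 1 + b) x"

definition D1b :: "nat \<Rightarrow> 'a list \<Rightarrow> 'a list set" where
  "D1b b x = (\<lambda>i. burst_del b i x) ` {1..length x - b + 1}"

end

theory Submission
  imports Defs
begin

text \<open>Deleting the burst at position i or at a later position j gives the same word exactly
  when x_p = x_{p+b} for all p between; so D_{1,b}(x) has one element more than there are
  positions p with x_p \<noteq> x_{p+b}. Appending a symbol c to a word y of length b + m adds such a
  position (namely m) unless c = y_m, which gives the recursion
  N(m+1, k) = N(m, k) + (q-1) N(m, k-1) for the number N(m, k) of words of length b + m with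
  k of them, and N(0, k) = [k = 0] q^b.\<close>

lemma card_image_atLeastAtMost_Suc:
  fixes f :: "nat \<Rightarrow> 'a" and B :: "nat \<Rightarrow> bool"
  assumes "\<And>i j. 1 \<le> i \<Longrightarrow> i \<le> j \<Longrightarrow> j \<le> Suc M \<Longrightarrow>
             f i = f j \<longleftrightarrow> (\<forall>p. i - 1 \<le> p \<and> p < j - 1 \<longrightarrow> \<not> B p)"
  shows "card (f ` {1..Suc M}) = Suc (card {p. p < M \<and> B p})"
  using assms
proof (induction M)
  case 0
  then show ?case by simp
next
  case (Suc M)
  have IH: "card (f ` {1..Suc M}) = Suc (card {p. p < M \<and> B p})"
    using Suc by simp
  have new: "f (Suc (Suc M)) \<in> f ` {1..Suc M} \<longleftrightarrow> \<not> B M"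
  proof
    assume "f (Suc (Suc M)) \<in> f ` {1..Suc M}"
    then obtain i where "i \<in> {1..Suc M}" "f i = f (Suc (Suc M))" by auto
    then show "\<not> B M" using Suc.prems[of i "Suc (Suc M)"] by auto
  next
    assume "\<not> B M"
    then have "f (Suc M) = f (Suc (Suc M))"
      using Suc.prems[of "Suc M" "Suc (Suc M)"] by (auto simp: less_Suc_eq)
    then show "f (Suc (Suc M)) \<in> f ` {1..Suc M}"
      by (intro image_eqI[where x="Suc M"]) auto
  qed
  have "f ` {1..Suc (Suc M)} = insert (f (Suc (Suc M))) (f ` {1..Suc M})"
    by (auto simp: atLeastAtMostSuc_conv)
  moreover have "{p. p < Suc M \<and> B p} = (if B M then insert M else id) {p. p < M \<and> B p}"
    by (auto simp: less_Suc_eq)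
  ultimately show ?case
    using IH new by (simp add: card_insert_if)
qed

lemma length_burst_del:
  assumes "1 \<le> i" "i \<le> length x - b + 1" "b \<le> length x"
  shows "length (burst_del b i x) = length x - b"
  using assms unfolding burst_del_def by auto

lemma nth_burst_del:
  assumes "1 \<le> i" "i \<le> length x - b + 1" "p < length x - b"
  shows "burst_del b i x ! p = (if p < i - 1 then x ! p else x ! (p + b))"
  using assms unfolding burst_del_def by (auto simp: nth_append min_def add.commute)

lemma burst_del_eq_iff:
  assumes "1 \<le> i" "i \<le> j" "j \<le> length x - b + 1" "b \<le> length x"
  shows "burst_del b i x = burst_del b j x \<longleftrightarrow>
         (\<forall>p. i - 1 \<le> p \<and> p < j - 1 \<longrightarrow> x ! p = x ! (p + b))"
proof -
  have "burst_del b i x = burst_del b j x \<longleftrightarrow>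
     (\<forall>p < length x - b. burst_del b i x ! p = burst_del b j x ! p)"
    using assms by (simp add: list_eq_iff_nth_eq length_burst_del)
  also have "\<dots> \<longleftrightarrow> (\<forall>p < length x - b. (if p < i - 1 then x ! p else x ! (p + b))
        = (if p < j - 1 then x ! p else x ! (p + b)))"
    using assms by (simp add: nth_burst_del)
  also have "\<dots> \<longleftrightarrow> (\<forall>p. i - 1 \<le> p \<and> p < j - 1 \<longrightarrow> x ! p = x ! (p + b))"
    using assms by (auto 0 3 simp: not_less)
  finally show ?thesis .
qed

definition burst_breaks :: "nat \<Rightarrow> 'a list \<Rightarrow> nat set" where
  "burst_breaks b x = {p. p < length x - b \<and> x ! p \<noteq> x ! (p + b)}"

lemma card_D1b:
  assumes "b \<le> length x"
  shows "card (D1b b x) = Suc (card (burst_breaks b x))"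
  unfolding D1b_def burst_breaks_def Suc_eq_plus1[symmetric]
  by (rule card_image_atLeastAtMost_Suc) (use assms burst_del_eq_iff in auto)

lemma burst_breaks_snoc:
  assumes "length y = b + m" "1 \<le> b"
  shows "burst_breaks b (y @ [c]) = (if y ! m = c then id else insert m) (burst_breaks b y)"
  using assms unfolding burst_breaks_def by (auto simp: nth_append less_Suc_eq)

lemma card_burst_breaks_snoc:
  assumes "length y = b + m" "1 \<le> b"
  shows "card (burst_breaks b (y @ [c])) = card (burst_breaks b y) + (if y ! m = c then 0 else 1)"
proof -
  have "m \<notin> burst_breaks b y" "finite (burst_breaks b y)"
    using assms unfolding burst_breaks_def by auto
  then show ?thesis using burst_breaks_snoc[OF assms] by simp
qed

lemma seqs_conv_lists: "seqs q n = {xs. set xs \<subseteq> {0..<q} \<and> length xs = n}"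
  unfolding seqs_def by auto

lemma finite_seqs: "finite (seqs q n)"
  by (simp add: seqs_conv_lists finite_lists_length_eq)

lemma card_seqs: "card (seqs q n) = q ^ n"
  by (simp add: seqs_conv_lists card_lists_length_eq)

lemma seqs_Suc: "seqs q (Suc n) = (\<lambda>(y, c). y @ [c]) ` (seqs q n \<times> {0..<q})"
proof (intro equalityI subsetI)
  fix x assume "x \<in> seqs q (Suc n)"
  then have "x \<noteq> []" "set x \<subseteq> {0..<q}" "length x = Suc n"
    unfolding seqs_def by auto
  then have "x = butlast x @ [last x]" "butlast x \<in> seqs q n" "last x < q"
    unfolding seqs_def by (auto dest: in_set_butlastD last_in_set)
  then show "x \<in> (\<lambda>(y, c). y @ [c]) ` (seqs q n \<times> {0..<q})"
    by (intro image_eqI[where x="(butlast x, last x)"]) auto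
qed (auto simp: seqs_def)

lemma card_seqs_Suc_filter:
  "card {x \<in> seqs q (Suc n). P x} = (\<Sum>y\<in>seqs q n. card {c. c < q \<and> P (y @ [c])})"
proof -
  have "{x \<in> seqs q (Suc n). P x}
      = (\<lambda>(y, c). y @ [c]) ` (SIGMA y:seqs q n. {c. c < q \<and> P (y @ [c])})"
    by (auto simp: seqs_Suc)
  moreover have "inj_on (\<lambda>(y, c). y @ [c]) (SIGMA y:seqs q n. {c. c < q \<and> P (y @ [c])})"
    by (rule inj_onI) auto
  ultimately show ?thesis
    by (simp add: card_image card_SigmaI finite_seqs)
qed

definition seqs_with_breaks :: "nat \<Rightarrow> nat \<Rightarrow> nat \<Rightarrow> nat \<Rightarrow> nat list set" where
  "seqs_with_breaks b q n k = {x \<in> seqs q n. card (burst_breaks b x) = k}"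

lemma card_extensions_with_breaks:
  assumes "y \<in> seqs q (b + m)" "1 \<le> b"
  shows "card {c. c < q \<and> card (burst_breaks b (y @ [c])) = k}
       = (if card (burst_breaks b y) = k then 1 else 0)
         + (if Suc (card (burst_breaks b y)) = k then q - 1 else 0)"
proof -
  have len: "length y = b + m" and "set y \<subseteq> {0..<q}"
    using assms(1) unfolding seqs_def by auto
  moreover have "m < length y"
    using len assms(2) by simp
  ultimately have "y ! m < q"
    by (meson atLeastLessThan_iff nth_mem subsetD)
  then have "{c. c < q \<and> card (burst_breaks b (y @ [c])) = k}
      = (if card (burst_breaks b y) = k then {y ! m} else {})
        \<union> (if Suc (card (burst_breaks b y)) = k then {0..<q} - {y ! m} else {})"
    by (auto simp: card_burst_breaks_snoc[OF len assms(2)])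
  then show ?thesis
    using \<open>y ! m < q\<close> by (simp add: card_Diff_singleton)
qed

lemma card_seqs_with_breaks_Suc:
  assumes "1 \<le> b"
  shows "card (seqs_with_breaks b q (b + Suc m) k)
       = card (seqs_with_breaks b q (b + m) k)
         + (q - 1) * card {y \<in> seqs q (b + m). Suc (card (burst_breaks b y)) = k}"
proof -
  have "card (seqs_with_breaks b q (b + Suc m) k)
      = (\<Sum>y\<in>seqs q (b + m). (if card (burst_breaks b y) = k then 1 else 0)
         + (if Suc (card (burst_breaks b y)) = k then q - 1 else 0))"
    unfolding seqs_with_breaks_def
    by (simp add: card_seqs_Suc_filter card_extensions_with_breaks[OF _ assms])
  then show ?thesis
    by (simp add: sum.distrib sum.If_cases finite_seqs seqs_with_breaks_def Int_def)
qed

lemma card_seqs_with_breaks: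
  assumes "1 \<le> b"
  shows "card (seqs_with_breaks b q (b + m) k) = q ^ b * (q - 1) ^ k * (m choose k)"
proof (induction m arbitrary: k)
  case 0
  have "burst_breaks b x = {}" if "x \<in> seqs q b" for x
    using that unfolding seqs_def burst_breaks_def by auto
  then have "seqs_with_breaks b q b k = (if k = 0 then seqs q b else {})"
    unfolding seqs_with_breaks_def by auto
  then show ?case by (simp add: card_seqs)
next
  case (Suc m)
  show ?case
  proof (cases k)
    case 0
    then show ?thesis using card_seqs_with_breaks_Suc[OF assms, of q m k] Suc.IH by simp
  next
    case (Suc k')
    have "card (seqs_with_breaks b q (b + Suc m) k)
        = card (seqs_with_breaks b q (b + m) (Suc k'))
          + (q - 1) * card (seqs_with_breaks b q (b + m) k')"
      using card_seqs_with_breaks_Suc[OF assms, of q m k] Suc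
      by (simp add: seqs_with_breaks_def)
    also have "\<dots> = q ^ b * (q - 1) ^ Suc k' * ((m choose Suc k') + (m choose k'))"
      using Suc.IH[of "Suc k'"] Suc.IH[of k'] by (simp add: add_mult_distrib2 ac_simps)
    finally show ?thesis using Suc by simp
  qed
qed

theorem lemma4p4:
  fixes b q n i :: nat
  assumes "b \<ge> 1" and "q \<ge> 2" and "n \<ge> b + 1"
    and "1 \<le> i" and "i \<le> n - b + 1"
  shows "card {x \<in> seqs q n. card (D1b b x) = i}
         = q ^ b * (q - 1) ^ (i - 1) * ((n - b) choose (i - 1))"
proof -
  have "{x \<in> seqs q n. card (D1b b x) = i} = seqs_with_breaks b q (b + (n - b)) (i - 1)"
    using assms by (auto simp: seqs_with_breaks_def seqs_def card_D1b)
  then show ?thesis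
    using card_seqs_with_breaks[OF assms(1)] by simp
qed

end
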